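(* Let $(G,t)$ be a non-trivial problem instance, let $X$ be a tidy modulator of $G$, and let $B$ be a biconnected induced subgraph of $G-X$. Then $|\partial_G(V(B))|\le 2|X|$.
   Context: $\mathrm{tw}$ is treewidth. A problem instance is $(G,t)$ with $t\in\mathbb{N}$. A modulator of $G$ is $X$ with $\mathrm{tw}(G-X)\le 2$; tidy if also $\mathrm{tw}(G-(X\setminus\{x\}))\le 2$ for all $x\in X$. $(G,t)$ is trivial if $|V(G)|\le 4$, or $\mathrm{tw}(G)\le 2$, or $t=0$, or some connected subgraph $H$ of $G$ satisfies $\mathrm{tw}\big(G[N_G[H]]\cup\binom{N_G(H)}{2}\big)\le 2$ (where $N_G(H)$ is the set of vertices outside $H$ adjacent to $H$, $N_G[H]=V(H)\cup N_G(H)$, and $\cup\binom{N_G(H)}{2}$ adds all edges among $N_G(H)$); otherwise non-trivial. A graph is biconnected if it is connected and has no articulation vertex. For $U\subseteq V(G)$, $\partial_G(U)$ is the set of vertices of $U$ having a neighbour outside $U$. *)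

theory Defs
  imports Main
begin

definition wf_graph :: "'a set \<Rightarrow> 'a set set \<Rightarrow> bool" where
  "wf_graph V E \<longleftrightarrow> finite V \<and>
     (\<forall>e\<in>E. \<exists>u v. e = {u, v} \<and> u \<noteq> v \<and> u \<in> V \<and> v \<in> V)"

definition reachable :: "'a set \<Rightarrow> 'a set set \<Rightarrow> 'a \<Rightarrow> 'a \<Rightarrow> bool" where
  "reachable V E u v \<longleftrightarrow> u \<in> V \<and>
     (\<lambda>x y. x \<in> V \<and> y \<in> V \<and> {x, y} \<in> E)\<^sup>*\<^sup>* u v"

definition connected_graph :: "'a set \<Rightarrow> 'a set set \<Rightarrow> bool" where
  "connected_graph V E \<longleftrightarrow> V \<noteq> {} \<and> (\<forall>u\<in>V. \<forall>v\<in>V. reachable V E u v)"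

definition components :: "'a set \<Rightarrow> 'a set set \<Rightarrow> 'a set set" where
  "components V E = {C. \<exists>v\<in>V. C = {u\<in>V. reachable V E v u}}"

definition induced_edges :: "'a set set \<Rightarrow> 'a set \<Rightarrow> 'a set set" where
  "induced_edges E S = {e\<in>E. e \<subseteq> S}"

definition articulation :: "'a set \<Rightarrow> 'a set set \<Rightarrow> 'a \<Rightarrow> bool" where
  "articulation V E v \<longleftrightarrow> v \<in> V \<and>
     card (components (V - {v}) (induced_edges E (V - {v}))) > card (components V E)"

definition biconnected :: "'a set \<Rightarrow> 'a set set \<Rightarrow> bool" where
  "biconnected V E \<longleftrightarrow> connected_graph V E \<and> (\<forall>v\<in>V. \<not> articulation V E v)"

definition has_cycle :: "'a set \<Rightarrow> 'a set set \<Rightarrow> bool" where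
  "has_cycle V E \<longleftrightarrow> (\<exists>cs. length cs \<ge> 3 \<and> distinct cs \<and> set cs \<subseteq> V \<and>
     (\<forall>i. Suc i < length cs \<longrightarrow> {cs ! i, cs ! Suc i} \<in> E) \<and> {last cs, hd cs} \<in> E)"

definition is_tree :: "'b set \<Rightarrow> 'b set set \<Rightarrow> bool" where
  "is_tree I F \<longleftrightarrow> wf_graph I F \<and> connected_graph I F \<and> \<not> has_cycle I F"

definition tree_decomp :: "'a set \<Rightarrow> 'a set set \<Rightarrow> nat set \<Rightarrow> nat set set \<Rightarrow> (nat \<Rightarrow> 'a set) \<Rightarrow> bool" where
  "tree_decomp V E I F \<beta> \<longleftrightarrow> is_tree I F \<and> (\<forall>i\<in>I. \<beta> i \<subseteq> V) \<and>
     (\<forall>v\<in>V. \<exists>i\<in>I. v \<in> \<beta> i) \<and> (\<forall>e\<in>E. \<exists>i\<in>I. e \<subseteq> \<beta> i) \<and>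
     (\<forall>v\<in>V. connected_graph {i\<in>I. v \<in> \<beta> i} (induced_edges F {i\<in>I. v \<in> \<beta> i}))"

definition has_tw_le :: "'a set \<Rightarrow> 'a set set \<Rightarrow> nat \<Rightarrow> bool" where
  "has_tw_le V E k \<longleftrightarrow> (\<exists>I F \<beta>. tree_decomp V E I F \<beta> \<and> (\<forall>i\<in>I. card (\<beta> i) \<le> k + 1))"

definition treewidth :: "'a set \<Rightarrow> 'a set set \<Rightarrow> nat" where
  "treewidth V E = (LEAST k. has_tw_le V E k)"

definition del_edges :: "'a set \<Rightarrow> 'a set set \<Rightarrow> 'a set \<Rightarrow> 'a set set" where
  "del_edges V E X = induced_edges E (V - X)"

definition nbhd :: "'a set \<Rightarrow> 'a set set \<Rightarrow> 'a set \<Rightarrow> 'a set" where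
  "nbhd V E S = {v\<in>V - S. \<exists>u\<in>S. {u, v} \<in> E}"

definition closed_nbhd :: "'a set \<Rightarrow> 'a set set \<Rightarrow> 'a set \<Rightarrow> 'a set" where
  "closed_nbhd V E S = S \<union> nbhd V E S"

definition torso_edges :: "'a set \<Rightarrow> 'a set set \<Rightarrow> 'a set \<Rightarrow> 'a set set" where
  "torso_edges V E S = induced_edges E (closed_nbhd V E S) \<union>
     {{u, v} | u v. u \<in> nbhd V E S \<and> v \<in> nbhd V E S \<and> u \<noteq> v}"

definition trivial_instance :: "'a set \<Rightarrow> 'a set set \<Rightarrow> nat \<Rightarrow> bool" where
  "trivial_instance V E t \<longleftrightarrow> card V \<le> 4 \<or> treewidth V E \<le> 2 \<or> t = 0 \<or>
     (\<exists>VH EH. VH \<subseteq> V \<and> EH \<subseteq> E \<and> (\<forall>e\<in>EH. e \<subseteq> VH) \<and> connected_graph VH EH \<and>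
        treewidth (closed_nbhd V E VH) (torso_edges V E VH) \<le> 2)"

definition modulator :: "'a set \<Rightarrow> 'a set set \<Rightarrow> 'a set \<Rightarrow> bool" where
  "modulator V E X \<longleftrightarrow> X \<subseteq> V \<and> treewidth (V - X) (del_edges V E X) \<le> 2"

definition tidy_modulator :: "'a set \<Rightarrow> 'a set set \<Rightarrow> 'a set \<Rightarrow> bool" where
  "tidy_modulator V E X \<longleftrightarrow> modulator V E X \<and>
     (\<forall>x\<in>X. treewidth (V - (X - {x})) (del_edges V E (X - {x})) \<le> 2)"

definition boundary :: "'a set \<Rightarrow> 'a set set \<Rightarrow> 'a set \<Rightarrow> 'a set" where
  "boundary V E U = {u\<in>U. \<exists>w\<in>V - U. {u, w} \<in> E}"

end

theory Submission
  imports Defs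
begin

text \<open>For \<open>x \<in> X\<close> let \<open>Z\<^sub>x\<close> be the component of \<open>x\<close> in \<open>G - (X - {x}) - S\<close> and \<open>A\<^sub>x\<close> its set of
  neighbours in \<open>S\<close>. Every boundary vertex of \<open>S\<close> lies in some \<open>A\<^sub>x\<close>: its outside neighbour is in
  \<open>X\<close> or in a component of \<open>G - X - S\<close>, and such a component touches \<open>X\<close>, since otherwise it
  is attached to the biconnected \<open>S\<close> in at most two vertices, its torso has treewidth at most 2,
  and the instance would be trivial. On the other hand \<open>|A\<^sub>x| \<le> 2\<close>: three attachments of the
  connected set \<open>Z\<^sub>x\<close> to \<open>S\<close> yield a \<open>K\<^sub>4\<close> minor in \<open>G - (X - {x})\<close>, which has treewidth at
  most 2 because \<open>X\<close> is tidy. Hence \<open>|\<partial>S| \<le> \<Sum>\<^sub>x |A\<^sub>x| \<le> 2|X|\<close>.\<close>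

section \<open>Reachability and connectivity\<close>

definition adj :: "'a set \<Rightarrow> 'a set set \<Rightarrow> 'a \<Rightarrow> 'a \<Rightarrow> bool" where
  "adj W E x y \<longleftrightarrow> x \<in> W \<and> y \<in> W \<and> {x, y} \<in> E"

definition component :: "'a set \<Rightarrow> 'a set set \<Rightarrow> 'a \<Rightarrow> 'a set" where
  "component W E v = {u \<in> W. reachable W E v u}"

lemma reachable_iff_adj: "reachable W E u v \<longleftrightarrow> u \<in> W \<and> (adj W E)\<^sup>*\<^sup>* u v"
proof -
  have "adj W E = (\<lambda>x y. x \<in> W \<and> y \<in> W \<and> {x, y} \<in> E)"
    by (auto simp: adj_def fun_eq_iff)
  then show ?thesis by (simp add: reachable_def)
qed

lemma reachable_target_in:
  assumes "reachable W E u v"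
  shows "v \<in> W"
proof -
  have "(adj W E)\<^sup>*\<^sup>* u v" "u \<in> W" using assms by (auto simp: reachable_iff_adj)
  then show ?thesis by (induction rule: rtranclp_induct) (auto simp: adj_def)
qed

lemma reachable_refl: "u \<in> W \<Longrightarrow> reachable W E u u"
  by (simp add: reachable_def)

lemma reachable_edge: "u \<in> W \<Longrightarrow> v \<in> W \<Longrightarrow> {u, v} \<in> E \<Longrightarrow> reachable W E u v"
  by (auto simp: reachable_def)

lemma reachable_trans: "reachable W E u v \<Longrightarrow> reachable W E v w \<Longrightarrow> reachable W E u w"
  by (auto simp: reachable_def)

lemma adj_sym: "adj W E x y \<Longrightarrow> adj W E y x"
  by (auto simp: adj_def insert_commute)

lemma reachable_sym:
  assumes "reachable W E u v"
  shows "reachable W E v u"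
proof -
  have "(adj W E)\<^sup>*\<^sup>* u v" using assms by (simp add: reachable_iff_adj)
  then have "(adj W E)\<^sup>*\<^sup>* v u"
    by (induction rule: rtranclp_induct)
      (auto intro: converse_rtranclp_into_rtranclp adj_sym)
  then show ?thesis using reachable_target_in[OF assms] by (simp add: reachable_iff_adj)
qed

lemma reachable_mono:
  assumes "reachable W E u v" "W \<subseteq> W'"
    and "\<And>x y. x \<in> W \<Longrightarrow> y \<in> W \<Longrightarrow> {x, y} \<in> E \<Longrightarrow> {x, y} \<in> E'"
  shows "reachable W' E' u v"
proof -
  have "(adj W E)\<^sup>*\<^sup>* u v" "u \<in> W" using assms(1) by (auto simp: reachable_iff_adj)
  moreover have "adj W E \<le> adj W' E'" using assms(2,3) by (auto simp: adj_def)
  ultimately have "(adj W' E')\<^sup>*\<^sup>* u v" by (metis rtranclp_mono predicate2D)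
  then show ?thesis using \<open>u \<in> W\<close> assms(2) by (auto simp: reachable_iff_adj)
qed

lemma reachable_subset: "reachable W E u v \<Longrightarrow> W \<subseteq> W' \<Longrightarrow> reachable W' E u v"
  by (rule reachable_mono) auto

lemma reachable_crosses:
  assumes "reachable W E u v" "u \<in> A" "v \<notin> A"
  shows "\<exists>x y. x \<in> A \<and> x \<in> W \<and> y \<in> W \<and> y \<notin> A \<and> {x, y} \<in> E"
proof -
  have "(adj W E)\<^sup>*\<^sup>* u v" using assms by (simp add: reachable_iff_adj)
  from this assms(3) show ?thesis
  proof (induction rule: rtranclp_induct)
    case (step y z)
    then show ?case by (cases "y \<in> A") (auto simp: adj_def)
  qed (use assms in simp)
qed

lemma reachable_induced_edges:
  "W \<subseteq> U \<Longrightarrow> reachable W (induced_edges E U) u v = reachable W E u v"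
proof -
  assume "W \<subseteq> U"
  then have "(\<lambda>x y. x \<in> W \<and> y \<in> W \<and> {x, y} \<in> induced_edges E U)
           = (\<lambda>x y. x \<in> W \<and> y \<in> W \<and> {x, y} \<in> E)"
    by (auto simp: induced_edges_def fun_eq_iff)
  then show ?thesis by (simp add: reachable_def)
qed

lemma connected_graph_induced_edges:
  "W \<subseteq> U \<Longrightarrow> connected_graph W (induced_edges E U) = connected_graph W E"
  by (simp add: connected_graph_def reachable_induced_edges)

lemma induced_edges_induced_edges:
  "induced_edges (induced_edges E A) B = induced_edges E (A \<inter> B)"
  by (auto simp: induced_edges_def)

lemma connected_graph_singleton: "connected_graph {a} E"
  by (auto simp: connected_graph_def reachable_refl)

lemma component_subset: "component W E v \<subseteq> W"
  by (auto simp: component_def)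

lemma self_in_component: "v \<in> W \<Longrightarrow> v \<in> component W E v"
  by (simp add: component_def reachable_refl)

lemma component_closed:
  "y \<in> component W E v \<Longrightarrow> u \<in> W \<Longrightarrow> {y, u} \<in> E \<Longrightarrow> u \<in> component W E v"
  by (auto simp: component_def intro: reachable_trans reachable_edge)

lemma connected_component:
  assumes "v \<in> W"
  shows "connected_graph (component W E v) E"
proof -
  let ?D = "component W E v"
  have "(adj ?D E)\<^sup>*\<^sup>* v z" if "(adj W E)\<^sup>*\<^sup>* v z" for z
    using that
  proof (induction rule: rtranclp_induct)
    case (step y z)
    then have "y \<in> ?D" "z \<in> ?D"
      using assms by (auto simp: component_def reachable_iff_adj adj_def
          intro: rtranclp.rtrancl_into_rtrancl)
    with step show ?case by (auto simp: adj_def intro: rtranclp.rtrancl_into_rtrancl)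
  qed simp
  then have from_v: "reachable ?D E v z" if "z \<in> ?D" for z
    using that assms self_in_component[OF assms]
    by (auto simp: component_def reachable_iff_adj)
  show ?thesis unfolding connected_graph_def
  proof (intro conjI ballI)
    show "?D \<noteq> {}" using self_in_component[OF assms] by blast
    fix x y assume "x \<in> ?D" "y \<in> ?D"
    then show "reachable ?D E x y" using from_v by (meson reachable_sym reachable_trans)
  qed
qed

lemma components_eq_component_image: "components W E = component W E ` W"
  by (auto simp: components_def component_def)

lemma components_of_connected:
  assumes "connected_graph W E"
  shows "components W E = {W}"
proof -
  have "component W E v = W" if "v \<in> W" for v
    using assms that by (auto simp: connected_graph_def component_def)
  then show ?thesis
    using assms by (auto simp: components_eq_component_image connected_graph_def)
qed

lemma connected_if_card_components_le_1:
  assumes "finite W" "W \<noteq> {}" "card (components W E) \<le> 1"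
  shows "connected_graph W E"
  unfolding connected_graph_def
proof (intro conjI ballI)
  have "finite (components W E)"
    using assms(1) by (simp add: components_eq_component_image)
  then have same: "\<forall>C\<in>components W E. \<forall>C'\<in>components W E. C = C'"
    using assms(3) by (simp add: card_le_Suc0_iff_eq[symmetric])
  fix u v assume u: "u \<in> W" and v: "v \<in> W"
  have "component W E u = component W E v"
    using same u v unfolding components_eq_component_image by blast
  then have "v \<in> component W E u" using self_in_component[OF v] by simp
  then show "reachable W E u v" by (simp add: component_def)
qed (fact assms(2))

lemma biconnected_connected_Diff:
  assumes "biconnected W E" "finite W" "c \<in> W" "W - {c} \<noteq> {}"
  shows "connected_graph (W - {c}) E"
proof -
  have "card (components (W - {c}) (induced_edges E (W - {c}))) \<le> card (components W E)"
    using assms by (auto simp: biconnected_def articulation_def)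
  also have "\<dots> = 1" using assms(1) by (simp add: biconnected_def components_of_connected)
  finally have "connected_graph (W - {c}) (induced_edges E (W - {c}))"
    using assms(2,4) by (intro connected_if_card_components_le_1) auto
  then show ?thesis by (simp add: connected_graph_induced_edges)
qed

definition walk :: "'a set set \<Rightarrow> 'a list \<Rightarrow> bool" where
  "walk E cs \<longleftrightarrow> (\<forall>i. Suc i < length cs \<longrightarrow> {cs ! i, cs ! Suc i} \<in> E)"

lemma walk_take: "walk E cs \<Longrightarrow> walk E (take n cs)"
  by (auto simp: walk_def)

lemma walk_drop: "walk E cs \<Longrightarrow> walk E (drop n cs)"
  by (auto simp: walk_def)

lemma walk_snoc:
  assumes "walk E cs" "cs \<noteq> []" "{last cs, q} \<in> E"
  shows "walk E (cs @ [q])"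
  unfolding walk_def
proof (intro allI impI)
  fix i assume i: "Suc i < length (cs @ [q])"
  show "{(cs @ [q]) ! i, (cs @ [q]) ! Suc i} \<in> E"
  proof (cases "Suc i < length cs")
    case True
    then show ?thesis using assms(1) by (simp add: walk_def nth_append)
  next
    case False
    then have "Suc i = length cs" "i = length cs - 1" using i by simp_all
    then show ?thesis using assms(2,3) by (simp add: nth_append last_conv_nth)
  qed
qed

lemma reachable_imp_path:
  assumes "reachable W E u v"
  obtains P where "P \<noteq> []" "distinct P" "hd P = u" "last P = v" "set P \<subseteq> W" "walk E P"
proof -
  have "(adj W E)\<^sup>*\<^sup>* u v" and u: "u \<in> W" using assms by (auto simp: reachable_iff_adj)
  then have "\<exists>P. P \<noteq> [] \<and> distinct P \<and> hd P = u \<and> last P = v \<and> set P \<subseteq> W \<and> walk E P"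
  proof (induction rule: rtranclp_induct)
    case base
    show ?case by (rule exI[of _ "[u]"]) (use u in \<open>auto simp: walk_def\<close>)
  next
    case (step y z)
    then obtain P where P: "P \<noteq> []" "distinct P" "hd P = u" "last P = y" "set P \<subseteq> W" "walk E P"
      by blast
    have z: "z \<in> W" "{y, z} \<in> E" using step(2) by (auto simp: adj_def)
    show ?case
    proof (cases "z \<in> set P")
      case True
      then obtain k where k: "k < length P" "P ! k = z" by (auto simp: in_set_conv_nth)
      show ?thesis
      proof (rule exI[of _ "take (Suc k) P"], intro conjI)
        show "last (take (Suc k) P) = z" using k by (simp add: take_Suc_conv_app_nth)
        show "set (take (Suc k) P) \<subseteq> W" using P(5) set_take_subset by (metis subset_trans)
      qed (use P in \<open>simp_all add: walk_take\<close>)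
    next
      case False
      then show ?thesis using P z walk_snoc[OF P(6,1)] by (intro exI[of _ "P @ [z]"]) auto
    qed
  qed
  then show ?thesis using that by blast
qed

lemma connected_graph_walk:
  assumes "P \<noteq> []" "walk E P"
  shows "connected_graph (set P) E"
proof -
  have from_hd: "reachable (set P) E (P ! 0) (P ! i)" if "i < length P" for i
    using that
  proof (induction i)
    case 0
    then show ?case by (simp add: reachable_refl)
  next
    case (Suc i)
    then have "reachable (set P) E (P ! i) (P ! Suc i)"
      using assms(2) by (intro reachable_edge) (auto simp: walk_def)
    then show ?case using Suc reachable_trans by (metis Suc_lessD)
  qed
  show ?thesis unfolding connected_graph_def
  proof (intro conjI ballI)
    fix u v assume "u \<in> set P" "v \<in> set P"
    then obtain i j where "i < length P" "P ! i = u" "j < length P" "P ! j = v"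
      by (auto simp: in_set_conv_nth)
    then show "reachable (set P) E u v" using from_hd reachable_sym reachable_trans by metis
  qed (use assms in simp)
qed

section \<open>Trees\<close>

lemma wf_graph_edge:
  assumes "wf_graph I F" "{a, b} \<in> F"
  shows "a \<in> I" "b \<in> I" "a \<noteq> b"
  using assms unfolding wf_graph_def by (auto simp: doubleton_eq_iff)

lemma has_cycle_of_chord:
  assumes "walk F cs" "distinct cs" "set cs \<subseteq> I" "k + 3 \<le> length cs"
    and "{last cs, cs ! k} \<in> F"
  shows "has_cycle I F"
  unfolding has_cycle_def
proof (intro exI conjI)
  let ?ds = "drop k cs"
  show "3 \<le> length ?ds" "distinct ?ds" "set ?ds \<subseteq> I"
    using assms(2-4) set_drop_subset[of k cs] by auto
  show "\<forall>i. Suc i < length ?ds \<longrightarrow> {?ds ! i, ?ds ! Suc i} \<in> F"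
    using walk_drop[OF assms(1)] by (simp add: walk_def)
  show "{last ?ds, hd ?ds} \<in> F"
    using assms(4,5) by (simp add: hd_drop_conv_nth)
qed

text \<open>Any other neighbour of the last vertex would either extend the path or close a cycle.\<close>

lemma longest_path_last_neighbour:
  assumes "wf_graph I F" "\<not> has_cycle I F"
    and cs: "distinct cs" "set cs \<subseteq> I" "walk F cs" "2 \<le> length cs"
    and longest: "\<And>ds. distinct ds \<Longrightarrow> set ds \<subseteq> I \<Longrightarrow> walk F ds \<Longrightarrow> length ds \<le> length cs"
    and q: "{last cs, q} \<in> F"
  shows "q = cs ! (length cs - 2)"
proof (rule ccontr)
  assume q_ne: "q \<noteq> cs ! (length cs - 2)"
  have "q \<in> I" "q \<noteq> last cs" using wf_graph_edge[OF assms(1) q] by auto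
  have "cs \<noteq> []" using cs(4) by auto
  show False
  proof (cases "q \<in> set cs")
    case False
    then have "length (cs @ [q]) \<le> length cs"
      using cs \<open>q \<in> I\<close> walk_snoc[OF cs(3) \<open>cs \<noteq> []\<close> q] by (intro longest) auto
    then show False by simp
  next
    case True
    then obtain k where k: "k < length cs" "cs ! k = q" by (auto simp: in_set_conv_nth)
    have "k \<noteq> length cs - 1" using k \<open>q \<noteq> last cs\<close> \<open>cs \<noteq> []\<close> by (auto simp: last_conv_nth)
    moreover have "k \<noteq> length cs - 2" using q_ne k by auto
    ultimately have "k + 3 \<le> length cs" using k cs(4) by linarith
    then have "has_cycle I F" using cs q k by (intro has_cycle_of_chord[of F cs I k]) auto
    then show False using assms(2) by simp
  qed
qed

lemma tree_has_leaf:
  assumes "is_tree I F" "card I \<ge> 2"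
  obtains l p where "l \<in> I" "p \<in> I" "p \<noteq> l" "{l, p} \<in> F" "\<And>q. {l, q} \<in> F \<Longrightarrow> q = p"
proof -
  have wf: "wf_graph I F" and con: "connected_graph I F" and acyclic: "\<not> has_cycle I F"
    using assms(1) by (auto simp: is_tree_def)
  have fin: "finite I" using wf by (simp add: wf_graph_def)
  obtain u v where uv: "u \<in> I" "v \<in> I" "u \<noteq> v"
    using assms(2) fin card_le_Suc0_iff_eq[of I] by auto
  then obtain y where y: "y \<in> I" "{u, y} \<in> F"
    using con reachable_crosses[of I F u v "{u}"] by (auto simp: connected_graph_def)
  define path where "path cs \<longleftrightarrow> distinct cs \<and> set cs \<subseteq> I \<and> walk F cs" for cs
  have path_uy: "path [u, y]"
    using y uv wf_graph_edge[OF wf y(2)] by (auto simp: path_def walk_def)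
  have "length cs < Suc (card I)" if "path cs" for cs
    using that fin card_mono[of I "set cs"] by (auto simp: path_def distinct_card[symmetric])
  then obtain cs where cs: "path cs" and longest: "\<And>ds. path ds \<Longrightarrow> length ds \<le> length cs"
    using ex_has_greatest_nat[of path "[u, y]" length "Suc (card I)"] path_uy by blast
  define n where "n = length cs"
  have n: "n \<ge> 2" using longest[OF path_uy] by (simp add: n_def)
  have "{cs ! (n - 2), cs ! Suc (n - 2)} \<in> F"
    using cs n by (simp add: path_def walk_def n_def)
  moreover have "Suc (n - 2) = n - 1" "cs \<noteq> []" using n by (auto simp: n_def)
  ultimately have lp: "{last cs, cs ! (n - 2)} \<in> F" by (simp add: last_conv_nth n_def insert_commute)
  have only: "q = cs ! (n - 2)" if "{last cs, q} \<in> F" for q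
    unfolding n_def using longest_path_last_neighbour[OF wf acyclic _ _ _ _ _ that] cs n longest
    by (auto simp: path_def n_def)
  show ?thesis
    by (rule that[of "last cs" "cs ! (n - 2)", OF _ _ _ lp only])
      (use wf_graph_edge[OF wf lp] in auto)
qed

lemma connected_graph_remove_leaf:
  assumes "connected_graph W E" "l \<in> W" "p \<in> W" "p \<noteq> l"
    and "\<And>q. q \<in> W \<Longrightarrow> {l, q} \<in> E \<Longrightarrow> q = p"
  shows "connected_graph (W - {l}) E"
  unfolding connected_graph_def
proof (intro conjI ballI)
  show "W - {l} \<noteq> {}" using assms by auto
  fix u v assume u: "u \<in> W - {l}" and v: "v \<in> W - {l}"
  have "(adj W E)\<^sup>*\<^sup>* u v" using assms(1) u v by (auto simp: connected_graph_def reachable_iff_adj)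
  moreover
  have "(adj (W - {l}) E)\<^sup>*\<^sup>* u (if w = l then p else w)" if "(adj W E)\<^sup>*\<^sup>* u w" for w
    using that
  proof (induction rule: rtranclp_induct)
    case (step y z)
    then have yz: "y \<in> W" "z \<in> W" "{y, z} \<in> E" by (auto simp: adj_def)
    consider "y = l" "z = l" | "y \<noteq> l" "z = l" | "y = l" "z \<noteq> l" | "y \<noteq> l" "z \<noteq> l" by blast
    then show ?case
    proof cases
      case 2
      then have "y = p" using assms(5) yz by (simp add: insert_commute)
      with 2 step.IH show ?thesis by simp
    next
      case 3
      then have "z = p" using assms(5) yz by simp
      with 3 step.IH show ?thesis by simp
    next
      case 4
      then have "adj (W - {l}) E y z" using yz by (simp add: adj_def)
      with 4 step.IH show ?thesis by (simp add: rtranclp.rtrancl_into_rtrancl)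
    qed (use step.IH in simp)
  qed (use u in simp)
  ultimately have "(adj (W - {l}) E)\<^sup>*\<^sup>* u (if v = l then p else v)" by blast
  then show "reachable (W - {l}) E u v" using u v by (simp add: reachable_iff_adj)
qed

lemma has_cycle_mono:
  assumes "has_cycle W E" "W \<subseteq> W'" "E \<subseteq> E'"
  shows "has_cycle W' E'"
proof -
  obtain cs where cs: "length cs \<ge> 3" "distinct cs" "set cs \<subseteq> W"
    "\<forall>i. Suc i < length cs \<longrightarrow> {cs ! i, cs ! Suc i} \<in> E" "{last cs, hd cs} \<in> E"
    using assms(1) unfolding has_cycle_def by blast
  show ?thesis unfolding has_cycle_def by (rule exI[of _ cs]) (use cs assms(2,3) in auto)
qed

lemma is_tree_remove_leaf:
  assumes "is_tree I F" "l \<in> I" "p \<in> I" "p \<noteq> l" "\<And>q. {l, q} \<in> F \<Longrightarrow> q = p"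
  shows "is_tree (I - {l}) (induced_edges F (I - {l}))"
proof -
  have wf: "wf_graph I F" and con: "connected_graph I F" and acyclic: "\<not> has_cycle I F"
    using assms(1) by (auto simp: is_tree_def)
  have "wf_graph (I - {l}) (induced_edges F (I - {l}))"
    unfolding wf_graph_def
  proof (intro conjI ballI)
    show "finite (I - {l})" using wf by (simp add: wf_graph_def)
    fix e assume "e \<in> induced_edges F (I - {l})"
    then have e: "e \<in> F" "e \<subseteq> I - {l}" by (auto simp: induced_edges_def)
    then obtain u v where "e = {u, v}" "u \<noteq> v" using wf unfolding wf_graph_def by blast
    then show "\<exists>u v. e = {u, v} \<and> u \<noteq> v \<and> u \<in> I - {l} \<and> v \<in> I - {l}"
      using e(2) by blast
  qed
  moreover have "connected_graph (I - {l}) (induced_edges F (I - {l}))"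
    using connected_graph_remove_leaf[OF con assms(2-4)] assms(5)
    by (simp add: connected_graph_induced_edges)
  moreover have "induced_edges F (I - {l}) \<subseteq> F" by (auto simp: induced_edges_def)
  then have "\<not> has_cycle (I - {l}) (induced_edges F (I - {l}))"
    using acyclic has_cycle_mono[of "I - {l}" _ I F] by blast
  ultimately show ?thesis by (simp add: is_tree_def)
qed

lemma connected_subtree_remove_leaf:
  assumes "connected_graph T F" "T \<noteq> {l}" "p \<noteq> l" "\<And>q. {l, q} \<in> F \<Longrightarrow> q = p"
  shows "l \<in> T \<Longrightarrow> p \<in> T" "connected_graph (T - {l}) F"
proof -
  show p: "p \<in> T" if "l \<in> T"
  proof -
    obtain v where v: "v \<in> T" "v \<noteq> l" using assms(1,2) by (auto simp: connected_graph_def)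
    then have "reachable T F l v" using assms(1) \<open>l \<in> T\<close> by (simp add: connected_graph_def)
    then obtain y where "y \<in> T" "y \<noteq> l" "{l, y} \<in> F"
      using reachable_crosses[of T F l v "{l}"] v \<open>l \<in> T\<close> by blast
    then show "p \<in> T" using assms(4) by blast
  qed
  show "connected_graph (T - {l}) F"
  proof (cases "l \<in> T")
    case True
    then show ?thesis
      using connected_graph_remove_leaf[OF assms(1) True p[OF True] assms(3)] assms(4) by blast
  qed (use assms(1) in simp)
qed

lemma subtrees_remove_leaf:
  assumes leaf: "p \<noteq> l" "\<And>q. {l, q} \<in> F \<Longrightarrow> q = p"
    and sub: "\<And>j. j \<in> J \<Longrightarrow> T j \<subseteq> I \<and> connected_graph (T j) F"
    and meet: "\<And>j k. j \<in> J \<Longrightarrow> k \<in> J \<Longrightarrow> T j \<inter> T k \<noteq> {}"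
    and not_leaf: "\<And>j. j \<in> J \<Longrightarrow> T j \<noteq> {l}"
  shows "\<And>j. j \<in> J \<Longrightarrow> T j - {l} \<subseteq> I - {l} \<and>
           connected_graph (T j - {l}) (induced_edges F (I - {l}))"
    and "\<And>j k. j \<in> J \<Longrightarrow> k \<in> J \<Longrightarrow> (T j - {l}) \<inter> (T k - {l}) \<noteq> {}"
proof -
  fix j assume j: "j \<in> J"
  have "connected_graph (T j - {l}) F"
    using connected_subtree_remove_leaf(2)[OF _ not_leaf[OF j] leaf] sub[OF j] by blast
  moreover have "T j - {l} \<subseteq> I - {l}" using sub[OF j] by blast
  ultimately show "T j - {l} \<subseteq> I - {l} \<and> connected_graph (T j - {l}) (induced_edges F (I - {l}))"
    by (simp add: connected_graph_induced_edges)
next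
  fix j k assume jk: "j \<in> J" "k \<in> J"
  show "(T j - {l}) \<inter> (T k - {l}) \<noteq> {}"
  proof (cases "T j \<inter> T k \<subseteq> {l}")
    case True
    then have "l \<in> T j" "l \<in> T k" using meet[OF jk] by blast+
    then have "p \<in> T j" "p \<in> T k"
      using connected_subtree_remove_leaf(1)[OF _ not_leaf leaf] sub jk by blast+
    then show ?thesis using leaf(1) by blast
  qed blast
qed

text \<open>Induction on the tree: deleting a leaf keeps the subtrees pairwise intersecting, unless
  one of them is the leaf itself, which then lies in all of them.\<close>

lemma subtrees_Helly:
  assumes "is_tree I F"
    and "\<And>j. j \<in> J \<Longrightarrow> T j \<subseteq> I \<and> connected_graph (T j) F"
    and "\<And>j k. j \<in> J \<Longrightarrow> k \<in> J \<Longrightarrow> T j \<inter> T k \<noteq> {}"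
  shows "\<exists>i. \<forall>j\<in>J. i \<in> T j"
  using assms
proof (induction "card I" arbitrary: I F T rule: less_induct)
  case less
  have fin: "finite I" and con: "connected_graph I F"
    using less.prems(1) by (auto simp: is_tree_def wf_graph_def)
  show ?case
  proof (cases "card I \<ge> 2")
    case False
    obtain i0 where "i0 \<in> I" using con by (auto simp: connected_graph_def)
    moreover have "card I \<le> Suc 0" using False by simp
    ultimately have "I = {i0}" using card_le_Suc0_iff_eq[OF fin] by auto
    then have "i0 \<in> T j" if "j \<in> J" for j
      using less.prems(2)[OF that] less.prems(3)[OF that that] by auto
    then show ?thesis by blast
  next
    case True
    obtain l p where lp: "l \<in> I" "p \<in> I" "p \<noteq> l" "\<And>q. {l, q} \<in> F \<Longrightarrow> q = p"
      using tree_has_leaf[OF less.prems(1) True] by metis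
    show ?thesis
    proof (cases "\<exists>j\<in>J. T j = {l}")
      case True
      then show ?thesis using less.prems(3) by (metis Int_emptyI singletonD)
    next
      case False
      then have not_leaf: "T j \<noteq> {l}" if "j \<in> J" for j using that by blast
      have "\<exists>i. \<forall>j\<in>J. i \<in> T j - {l}"
      proof (rule less.hyps[of "I - {l}" "induced_edges F (I - {l})" "\<lambda>j. T j - {l}"])
        show "card (I - {l}) < card I" by (rule card_Diff1_less[OF fin lp(1)])
        show "is_tree (I - {l}) (induced_edges F (I - {l}))"
          by (rule is_tree_remove_leaf[OF less.prems(1) lp])
        show "T j - {l} \<subseteq> I - {l} \<and> connected_graph (T j - {l}) (induced_edges F (I - {l}))"
          if "j \<in> J" for j
          by (rule subtrees_remove_leaf(1)[OF lp(3,4) less.prems(2,3) not_leaf that])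
        show "(T j - {l}) \<inter> (T k - {l}) \<noteq> {}" if "j \<in> J" "k \<in> J" for j k
          by (rule subtrees_remove_leaf(2)[OF lp(3,4) less.prems(2,3) not_leaf that])
      qed
      then show ?thesis by blast
    qed
  qed
qed

section \<open>Tree decompositions\<close>

lemma connected_graph_UN:
  assumes "connected_graph W E"
    and "\<And>w. w \<in> W \<Longrightarrow> connected_graph (T w) F"
    and "\<And>y z. y \<in> W \<Longrightarrow> z \<in> W \<Longrightarrow> {y, z} \<in> E \<Longrightarrow> T y \<inter> T z \<noteq> {}"
  shows "connected_graph (\<Union>w\<in>W. T w) F"
proof -
  let ?U = "\<Union>w\<in>W. T w"
  have within: "reachable ?U F i i'" if "w \<in> W" "i \<in> T w" "i' \<in> T w" for w i i'
    using assms(2) that reachable_subset[of "T w" F i i' ?U] by (auto simp: connected_graph_def)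
  have from_bag: "\<forall>i'\<in>T w. reachable ?U F i i'" if "w0 \<in> W" "i \<in> T w0" "(adj W E)\<^sup>*\<^sup>* w0 w" for w0 i w
    using that(3)
  proof (induction rule: rtranclp_induct)
    case (step y z)
    then have yz: "y \<in> W" "z \<in> W" "{y, z} \<in> E" by (auto simp: adj_def)
    then obtain j where "j \<in> T y" "j \<in> T z" using assms(3) by blast
    then show ?case using step.IH within[OF yz(2)] reachable_trans by metis
  qed (use that within in blast)
  show ?thesis unfolding connected_graph_def
  proof (intro conjI ballI)
    obtain w where "w \<in> W" using assms(1) by (auto simp: connected_graph_def)
    then show "?U \<noteq> {}" using assms(2) by (auto simp: connected_graph_def)
    fix i i' assume "i \<in> ?U" "i' \<in> ?U"
    then obtain w w' where "w \<in> W" "i \<in> T w" "w' \<in> W" "i' \<in> T w'" by blast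
    moreover from this have "(adj W E)\<^sup>*\<^sup>* w w'"
      using assms(1) by (simp add: connected_graph_def reachable_iff_adj)
    ultimately show "reachable ?U F i i'" using from_bag by blast
  qed
qed

lemma tree_decomp_connected_bags:
  assumes "tree_decomp V E I F \<beta>" "W \<subseteq> V" "connected_graph W E"
  shows "connected_graph {i\<in>I. \<beta> i \<inter> W \<noteq> {}} F"
proof -
  have "{i\<in>I. \<beta> i \<inter> W \<noteq> {}} = (\<Union>w\<in>W. {i\<in>I. w \<in> \<beta> i})" by auto
  moreover have "connected_graph (\<Union>w\<in>W. {i\<in>I. w \<in> \<beta> i}) F"
  proof (rule connected_graph_UN[OF assms(3)])
    fix w assume "w \<in> W"
    then have "connected_graph {i\<in>I. w \<in> \<beta> i} (induced_edges F {i\<in>I. w \<in> \<beta> i})"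
      using assms(1,2) unfolding tree_decomp_def by blast
    then show "connected_graph {i\<in>I. w \<in> \<beta> i} F" by (simp add: connected_graph_induced_edges)
  next
    fix y z assume "{y, z} \<in> E"
    then obtain i where "i \<in> I" "{y, z} \<subseteq> \<beta> i" using assms(1) unfolding tree_decomp_def by blast
    then show "{i\<in>I. y \<in> \<beta> i} \<inter> {i\<in>I. z \<in> \<beta> i} \<noteq> {}" by blast
  qed
  ultimately show ?thesis by simp
qed

definition touching :: "'a set set \<Rightarrow> 'a set \<Rightarrow> 'a set \<Rightarrow> bool" where
  "touching E A B \<longleftrightarrow> (\<exists>x\<in>A. \<exists>y\<in>B. {x, y} \<in> E)"

lemma touching_sym: "touching E A B \<Longrightarrow> touching E B A"
  unfolding touching_def by (metis insert_commute)

definition K4_model :: "'a set set \<Rightarrow> (nat \<Rightarrow> 'a set) \<Rightarrow> bool" where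
  "K4_model E M \<longleftrightarrow> (\<forall>j<4. M j \<noteq> {} \<and> connected_graph (M j) E) \<and>
     (\<forall>j<4. \<forall>k<4. j \<noteq> k \<longrightarrow> M j \<inter> M k = {} \<and> touching E (M j) (M k))"

lemma K4_modelI:
  assumes "A \<noteq> {}" "B \<noteq> {}" "C \<noteq> {}" "D \<noteq> {}"
    and "connected_graph A E" "connected_graph B E" "connected_graph C E" "connected_graph D E"
    and "A \<inter> B = {}" "A \<inter> C = {}" "A \<inter> D = {}" "B \<inter> C = {}" "B \<inter> D = {}" "C \<inter> D = {}"
    and "touching E A B" "touching E A C" "touching E A D"
    and "touching E B C" "touching E B D" "touching E C D"
  shows "K4_model E (\<lambda>j. [A, B, C, D] ! j)"
proof -
  have four: "j < 4 \<longleftrightarrow> j = 0 \<or> j = 1 \<or> j = 2 \<or> j = 3" for j :: nat by arith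
  show ?thesis
    unfolding K4_model_def four
    using assms touching_sym[of E] by (auto simp: Int_commute)
qed

lemma K4_model_induced_edges:
  assumes "K4_model E M" "\<And>j. j < 4 \<Longrightarrow> M j \<subseteq> U"
  shows "K4_model (induced_edges E U) M"
proof -
  have "touching (induced_edges E U) (M j) (M k)" if "j < 4" "k < 4" "touching E (M j) (M k)" for j k
    using that assms(2)[of j] assms(2)[of k] by (auto simp: touching_def induced_edges_def)
  then show ?thesis
    using assms by (simp add: K4_model_def connected_graph_induced_edges)
qed

lemma tree_decomp_K4_model_common_bag:
  assumes td: "tree_decomp V E I F \<beta>"
    and M: "K4_model E M" "\<And>j. j < 4 \<Longrightarrow> M j \<subseteq> V"
  obtains i where "i \<in> I" "\<And>j. j < 4 \<Longrightarrow> \<beta> i \<inter> M j \<noteq> {}"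
proof -
  define T where "T j = {i\<in>I. \<beta> i \<inter> M j \<noteq> {}}" for j
  have "\<exists>i. \<forall>j\<in>{..<4}. i \<in> T j"
  proof (rule subtrees_Helly)
    show "is_tree I F" using td by (simp add: tree_decomp_def)
    show "T j \<subseteq> I \<and> connected_graph (T j) F" if "j \<in> {..<4}" for j
    proof -
      have "connected_graph (M j) E" using M(1) that by (simp add: K4_model_def)
      then show ?thesis using tree_decomp_connected_bags[OF td M(2)] that by (auto simp: T_def)
    qed
    show "T j \<inter> T k \<noteq> {}" if "j \<in> {..<4}" "k \<in> {..<4}" for j k
    proof (cases "j = k")
      case True
      have "M j \<noteq> {}" using M(1) that(1) by (simp add: K4_model_def)
      then obtain w where w: "w \<in> M j" by blast
      then have "w \<in> V" using M(2) that(1) by auto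
      then obtain i where "i \<in> I" "w \<in> \<beta> i" using td unfolding tree_decomp_def by blast
      then show ?thesis using True w by (auto simp: T_def)
    next
      case False
      then have "touching E (M j) (M k)" using M(1) that by (simp add: K4_model_def)
      then obtain x y where xy: "x \<in> M j" "y \<in> M k" "{x, y} \<in> E"
        by (auto simp: touching_def)
      then obtain i where "i \<in> I" "{x, y} \<subseteq> \<beta> i" using td unfolding tree_decomp_def by blast
      then show ?thesis using xy by (auto simp: T_def)
    qed
  qed
  then obtain i where i: "\<And>j. j < 4 \<Longrightarrow> i \<in> T j" by blast
  show ?thesis
  proof (rule that)
    show "i \<in> I" using i[of 0] by (simp add: T_def)
    show "\<beta> i \<inter> M j \<noteq> {}" if "j < 4" for j using i[OF that] by (simp add: T_def)
  qed
qed

lemma tree_decomp_K4_model_large_bag: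
  assumes td: "tree_decomp V E I F \<beta>" and "finite V"
    and M: "K4_model E M" "\<And>j. j < 4 \<Longrightarrow> M j \<subseteq> V"
  shows "\<exists>i\<in>I. 4 \<le> card (\<beta> i)"
proof -
  obtain i where iI: "i \<in> I" and meets: "\<And>j. j < 4 \<Longrightarrow> \<beta> i \<inter> M j \<noteq> {}"
    using tree_decomp_K4_model_common_bag[OF td M] by blast
  define f where "f j = (SOME x. x \<in> \<beta> i \<inter> M j)" for j
  have f: "f j \<in> \<beta> i \<inter> M j" if "j < 4" for j
    using meets[OF that] unfolding f_def by (metis ex_in_conv someI_ex)
  have "inj_on f {..<4}"
  proof (rule inj_onI)
    fix j k assume "j \<in> {..<4}" "k \<in> {..<4}" "f j = f k"
    moreover have "j \<noteq> k \<Longrightarrow> M j \<inter> M k = {}"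
      using M(1) calculation(1,2) by (simp add: K4_model_def)
    ultimately show "j = k" using f by (metis IntD2 disjoint_iff lessThan_iff)
  qed
  then have "card (f ` {..<4}) = 4" by (simp add: card_image)
  moreover have "finite (\<beta> i)"
    using td iI \<open>finite V\<close> unfolding tree_decomp_def by (meson finite_subset)
  then have "card (f ` {..<4}) \<le> card (\<beta> i)" using f by (intro card_mono) auto
  ultimately show ?thesis using iI by auto
qed

lemma has_tw_le_card:
  assumes "finite V" "\<forall>e\<in>E. e \<subseteq> V"
  shows "has_tw_le V E (card V)"
proof -
  have "\<not> has_cycle {0::nat} {}" by (simp add: has_cycle_def)
  then have "is_tree {0::nat} {}"
    by (simp add: is_tree_def wf_graph_def connected_graph_singleton)
  moreover have "connected_graph {i \<in> {0::nat}. v \<in> V} (induced_edges {} {i \<in> {0}. v \<in> V})"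
    if "v \<in> V" for v
    using that connected_graph_singleton by simp
  ultimately have "tree_decomp V E {0} {} (\<lambda>_. V)"
    using assms unfolding tree_decomp_def by blast
  then show ?thesis unfolding has_tw_le_def by fastforce
qed

lemma treewidth_le_imp_tree_decomp:
  assumes "finite V" "\<forall>e\<in>E. e \<subseteq> V" "treewidth V E \<le> k"
  obtains I F \<beta> where "tree_decomp V E I F \<beta>" "\<forall>i\<in>I. card (\<beta> i) \<le> k + 1"
proof -
  have "has_tw_le V E (treewidth V E)"
    unfolding treewidth_def by (rule LeastI[of "has_tw_le V E", OF has_tw_le_card[OF assms(1,2)]])
  then show ?thesis using that assms(3) unfolding has_tw_le_def by fastforce
qed

lemma treewidth_le_if_has_tw_le: "has_tw_le V E k \<Longrightarrow> treewidth V E \<le> k"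
  unfolding treewidth_def by (rule Least_le)

lemma treewidth_le_2_no_K4_model:
  assumes "finite V" "\<forall>e\<in>E. e \<subseteq> V" "treewidth V E \<le> 2"
    and "K4_model E M" "\<And>j. j < 4 \<Longrightarrow> M j \<subseteq> V"
  shows False
proof -
  obtain I F \<beta> where "tree_decomp V E I F \<beta>" "\<forall>i\<in>I. card (\<beta> i) \<le> 3"
    using treewidth_le_imp_tree_decomp[OF assms(1-3)] by auto
  then show False using tree_decomp_K4_model_large_bag[OF _ assms(1,4,5)] by fastforce
qed

section \<open>Attachments of a connected set to a biconnected set\<close>

definition attachments :: "'a set set \<Rightarrow> 'a set \<Rightarrow> 'a set \<Rightarrow> 'a set" where
  "attachments E S Z = {u \<in> S. \<exists>z\<in>Z. {u, z} \<in> E}"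

text \<open>A single attachment would be a cut vertex separating \<open>c\<close> from the rest of \<open>Q\<close>.\<close>

lemma biconnected_component_two_attachments:
  assumes "biconnected S E" "finite S" "c \<in> S" "Q \<subseteq> S - {c}" "a \<in> Q" "b \<in> Q" "a \<noteq> b"
  defines "C \<equiv> component (S - Q) E c"
  obtains x y where "x \<in> attachments E Q C" "y \<in> attachments E Q C" "x \<noteq> y"
proof -
  have exit: "\<exists>u\<in>attachments E Q C. u \<in> S'"
    if S': "S' \<subseteq> S" and reach: "reachable S' E c q" and q: "q \<in> Q" for S' q
  proof -
    have "c \<in> C" using assms(3,4) by (auto simp: C_def intro: self_in_component)
    moreover have "q \<notin> C" using q component_subset[of "S - Q" E c] by (auto simp: C_def)
    ultimately obtain x y where xy: "x \<in> C" "x \<in> S'" "y \<in> S'" "y \<notin> C" "{x, y} \<in> E"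
      using reachable_crosses[OF reach] by blast
    have "y \<in> Q"
      using component_closed[of x "S - Q" E c y] xy S' by (auto simp: C_def)
    moreover have "{y, x} \<in> E" using xy(5) by (simp add: insert_commute)
    ultimately show ?thesis using xy by (auto simp: attachments_def)
  qed
  have "connected_graph S E" using assms(1) by (simp add: biconnected_def)
  then have "reachable S E c a" using assms(3-5) by (auto simp: connected_graph_def)
  then obtain x where x: "x \<in> attachments E Q C" using exit[of S a] assms(5) by blast
  then have "x \<in> S" "x \<noteq> c" using assms(4) by (auto simp: attachments_def)
  then have "connected_graph (S - {x}) E"
    using biconnected_connected_Diff[OF assms(1,2)] assms(3) by blast
  moreover obtain q where "q \<in> Q" "q \<noteq> x" using assms(5-7) by metis
  ultimately have "reachable (S - {x}) E c q"
    using assms(3,4) \<open>x \<noteq> c\<close> by (auto simp: connected_graph_def)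
  then obtain y where "y \<in> attachments E Q C" "y \<noteq> x" using exit[of "S - {x}" q] \<open>q \<in> Q\<close> by blast
  then show ?thesis using that x by blast
qed

lemma K4_model_of_path:
  assumes P: "distinct P" "walk E P" "i < j" "j < length P"
    and C: "connected_graph C E" "C \<inter> set P = {}" "touching E {P ! i} C" "touching E {P ! j} C"
    and Z: "connected_graph Z E" "Z \<inter> set P = {}" "Z \<inter> C = {}"
      "touching E {hd P} Z" "touching E {last P} Z" "touching E C Z"
  shows "K4_model E (\<lambda>k. [set (take (Suc i) P), set (drop (Suc i) P), C, Z] ! k)"
proof -
  let ?A = "set (take (Suc i) P)" and ?B = "set (drop (Suc i) P)"
  have "P \<noteq> []" "take (Suc i) P \<noteq> []" "drop (Suc i) P \<noteq> []" using P(3,4) by auto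
  have in_A: "P ! k \<in> ?A" if "k \<le> i" for k
  proof -
    have "take (Suc i) P ! k = P ! k" "k < length (take (Suc i) P)" using that P(3,4) by simp_all
    then show ?thesis by (metis nth_mem)
  qed
  have in_B: "P ! k \<in> ?B" if "Suc i \<le> k" "k < length P" for k
  proof -
    have "drop (Suc i) P ! (k - Suc i) = P ! k" "k - Suc i < length (drop (Suc i) P)"
      using that by simp_all
    then show ?thesis by (metis nth_mem)
  qed
  have A: "hd P \<in> ?A" "P ! i \<in> ?A" using in_A \<open>P \<noteq> []\<close> by (simp_all add: hd_conv_nth)
  have B: "last P \<in> ?B" "P ! j \<in> ?B" "P ! Suc i \<in> ?B"
    using in_B P(3,4) \<open>P \<noteq> []\<close> by (simp_all add: last_conv_nth)
  have AB: "?A \<subseteq> set P" "?B \<subseteq> set P" by (auto dest: in_set_takeD in_set_dropD)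
  have "{P ! i, P ! Suc i} \<in> E" using P(2-4) by (simp add: walk_def)
  then have AB_touch: "touching E ?A ?B" using A(2) B(3) unfolding touching_def by blast
  show ?thesis
  proof (rule K4_modelI)
    show "?A \<noteq> {}" using A(1) by (metis empty_iff)
    show "?B \<noteq> {}" using B(1) by (metis empty_iff)
    show "C \<noteq> {}" "Z \<noteq> {}" using C(1) Z(1) by (simp_all add: connected_graph_def)
    show "connected_graph ?A E" "connected_graph ?B E"
      using P(2) \<open>take (Suc i) P \<noteq> []\<close> \<open>drop (Suc i) P \<noteq> []\<close>
      by (simp_all add: connected_graph_walk walk_take walk_drop)
    show "?A \<inter> ?B = {}" using P(1) by (rule set_take_disj_set_drop_if_distinct) simp
    show "?A \<inter> C = {}" "?A \<inter> Z = {}" "?B \<inter> C = {}" "?B \<inter> Z = {}" "C \<inter> Z = {}"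
      using AB C(2) Z(2,3) by blast+
    show "touching E ?A C" using A(2) C(3) unfolding touching_def by blast
    show "touching E ?B C" using B(2) C(4) unfolding touching_def by blast
    show "touching E ?A Z" using A(1) Z(4) unfolding touching_def by blast
    show "touching E ?B Z" using B(1) Z(5) unfolding touching_def by blast
  qed (fact AB_touch C(1) Z(1,6))+
qed

lemma two_elements_ordered_positions:
  assumes "x \<in> set P" "y \<in> set P" "x \<noteq> y"
  obtains i j where "i < j" "j < length P" "{P ! i, P ! j} = {x, y}"
proof -
  obtain i0 j0 where "i0 < length P" "P ! i0 = x" "j0 < length P" "P ! j0 = y"
    using assms(1,2) by (auto simp: in_set_conv_nth)
  moreover from this have "i0 \<noteq> j0" using assms(3) by blast
  ultimately show ?thesis
    using that[of "min i0 j0" "max i0 j0"] by (cases "i0 < j0") (auto simp: insert_commute)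
qed

text \<open>Join \<open>a\<close> and \<open>b\<close> by a path avoiding \<open>c\<close>. The component \<open>C\<close> of \<open>c\<close> off the path has two
  attachments on it, which cut the path into the two branch sets besides \<open>C\<close> and \<open>Z\<close>.\<close>

lemma K4_model_of_three_attachments:
  assumes "biconnected S E" "finite S" "connected_graph Z E" "Z \<inter> S = {}"
    and "a \<in> attachments E S Z" "b \<in> attachments E S Z" "c \<in> attachments E S Z"
    and "a \<noteq> b" "a \<noteq> c" "b \<noteq> c"
  obtains M where "K4_model E M" "\<And>j. j < 4 \<Longrightarrow> M j \<subseteq> S \<union> Z"
proof -
  have abc: "a \<in> S" "b \<in> S" "c \<in> S" using assms(5-7) by (auto simp: attachments_def)
  then have "connected_graph (S - {c}) E"
    using biconnected_connected_Diff[OF assms(1,2)] assms(9) by blast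
  then have "reachable (S - {c}) E a b" using abc assms(9,10) by (simp add: connected_graph_def)
  then obtain P where P: "P \<noteq> []" "distinct P" "hd P = a" "last P = b" "set P \<subseteq> S - {c}" "walk E P"
    by (rule reachable_imp_path)
  have ab: "a \<in> set P" "b \<in> set P" using P(1,3,4) by auto
  define C where "C = component (S - set P) E c"
  have cC: "c \<in> C" using abc P(5) by (auto simp: C_def intro: self_in_component)
  have CS: "C \<subseteq> S - set P" by (simp add: C_def component_subset)
  obtain x y where xy: "x \<in> attachments E (set P) C" "y \<in> attachments E (set P) C" "x \<noteq> y"
    using biconnected_component_two_attachments[OF assms(1,2) abc(3) P(5) ab assms(8)]
    by (auto simp: C_def)
  obtain i j where ij: "i < j" "j < length P" "{P ! i, P ! j} = {x, y}"
    using two_elements_ordered_positions[of x P y] xy by (auto simp: attachments_def)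
  have touch: "touching E {P ! i} C" "touching E {P ! j} C"
    using ij(3) xy(1,2) by (auto simp: attachments_def touching_def doubleton_eq_iff)
  have "K4_model E (\<lambda>k. [set (take (Suc i) P), set (drop (Suc i) P), C, Z] ! k)"
  proof (rule K4_model_of_path[OF P(2,6) ij(1,2)])
    show "connected_graph C E" using cC CS by (auto simp: C_def intro: connected_component)
    show "C \<inter> set P = {}" "Z \<inter> set P = {}" "Z \<inter> C = {}" using CS P(5) assms(4) by auto
    show "touching E {hd P} Z" "touching E {last P} Z"
      using P(3,4) assms(5,6) by (auto simp: touching_def attachments_def)
    show "touching E C Z" using cC assms(7) unfolding touching_def attachments_def by blast
  qed (fact touch assms(3))+
  moreover have "[set (take (Suc i) P), set (drop (Suc i) P), C, Z] ! k \<subseteq> S \<union> Z" if "k < 4" for k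
  proof -
    have "k = 0 \<or> k = 1 \<or> k = 2 \<or> k = 3" using that by arith
    then show ?thesis
      using P(5) CS set_take_subset[of "Suc i" P] set_drop_subset[of "Suc i" P] by auto
  qed
  ultimately show ?thesis using that by blast
qed

lemma card_attachments_le_2:
  assumes "finite U" "treewidth U (induced_edges E U) \<le> 2" "S \<subseteq> U" "Z \<subseteq> U"
    and "biconnected S E" "connected_graph Z E" "Z \<inter> S = {}"
  shows "card (attachments E S Z) \<le> 2"
proof (rule ccontr)
  assume "\<not> card (attachments E S Z) \<le> 2"
  then have "3 \<le> card (attachments E S Z)" by simp
  then obtain T where "T \<subseteq> attachments E S Z" "card T = 3"
    by (metis obtain_subset_with_card_n)
  then obtain a b c where "a \<in> attachments E S Z" "b \<in> attachments E S Z" "c \<in> attachments E S Z"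
    "a \<noteq> b" "a \<noteq> c" "b \<noteq> c"
    unfolding card_3_iff by blast
  then obtain M where M: "K4_model E M" "\<And>j. j < 4 \<Longrightarrow> M j \<subseteq> S \<union> Z"
    using K4_model_of_three_attachments[OF assms(5) _ assms(6,7)] assms(1,3) finite_subset by metis
  have "\<forall>e\<in>induced_edges E U. e \<subseteq> U" by (simp add: induced_edges_def)
  then show False
    using treewidth_le_2_no_K4_model[OF assms(1) _ assms(2) K4_model_induced_edges[OF M(1)]]
      M(2) assms(3,4) by blast
qed

section \<open>Contracting a connected set into one vertex\<close>

lemma card_contracted_bag_le:
  assumes "finite B" "U \<inter> K = {a}"
  shows "card (B \<inter> U \<union> (if B \<inter> K \<noteq> {} then {a} else {})) \<le> card B"
proof -
  define \<phi> where "\<phi> v = (if v \<in> K then a else v)" for v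
  have "B \<inter> U \<union> (if B \<inter> K \<noteq> {} then {a} else {}) \<subseteq> \<phi> ` B"
    using assms(2) by (auto simp: \<phi>_def image_iff split: if_splits)
  then have "card (B \<inter> U \<union> (if B \<inter> K \<noteq> {} then {a} else {})) \<le> card (\<phi> ` B)"
    using assms(1) by (intro card_mono) auto
  also have "\<dots> \<le> card B" using assms(1) by (rule card_image_le)
  finally show ?thesis .
qed

text \<open>The condition on \<open>E'\<close> describes the graph obtained by contracting the connected set \<open>K\<close>
  onto \<open>a\<close> and restricting to \<open>U\<close>.\<close>

lemma tree_decomp_contract:
  assumes td: "tree_decomp V E I F \<beta>"
    and K: "K \<subseteq> V" "a \<in> K" "connected_graph K E"
    and U: "U \<subseteq> V" "U \<inter> K = {a}"
    and E': "\<forall>e\<in>E'. (e \<subseteq> U \<and> e \<in> E) \<or> (\<exists>v\<in>U. e = {a, v} \<and> (\<exists>w\<in>K. {w, v} \<in> E))"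
  shows "tree_decomp U E' I F (\<lambda>i. \<beta> i \<inter> U \<union> (if \<beta> i \<inter> K \<noteq> {} then {a} else {}))"
    (is "tree_decomp U E' I F ?\<beta>'")
  unfolding tree_decomp_def
proof (intro conjI ballI)
  show "is_tree I F" using td by (simp add: tree_decomp_def)
  show "?\<beta>' i \<subseteq> U" for i using U(2) by auto
next
  fix v assume "v \<in> U"
  then obtain i where "i \<in> I" "v \<in> \<beta> i" using td U(1) unfolding tree_decomp_def by blast
  then show "\<exists>i\<in>I. v \<in> ?\<beta>' i" using \<open>v \<in> U\<close> by auto
next
  fix e assume "e \<in> E'"
  then consider "e \<subseteq> U" "e \<in> E" | v w where "v \<in> U" "e = {a, v}" "w \<in> K" "{w, v} \<in> E"
    using E' by blast
  then show "\<exists>i\<in>I. e \<subseteq> ?\<beta>' i"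
  proof cases
    case 1
    then obtain i where "i \<in> I" "e \<subseteq> \<beta> i" using td unfolding tree_decomp_def by blast
    then show ?thesis using 1 by auto
  next
    case 2
    then obtain i where "i \<in> I" "{w, v} \<subseteq> \<beta> i" using td unfolding tree_decomp_def by blast
    then show ?thesis using 2 by auto
  qed
next
  fix v assume v: "v \<in> U"
  have "{i \<in> I. v \<in> ?\<beta>' i} = (if v = a then {i \<in> I. \<beta> i \<inter> K \<noteq> {}} else {i \<in> I. v \<in> \<beta> i})"
    using v K(2) U(2) by auto
  moreover have "connected_graph {i \<in> I. \<beta> i \<inter> K \<noteq> {}} F"
    by (rule tree_decomp_connected_bags[OF td K(1,3)])
  moreover have "connected_graph {i \<in> I. v \<in> \<beta> i} (induced_edges F {i \<in> I. v \<in> \<beta> i})"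
    using td v U(1) unfolding tree_decomp_def by blast
  ultimately show "connected_graph {i \<in> I. v \<in> ?\<beta>' i} (induced_edges F {i \<in> I. v \<in> ?\<beta>' i})"
    by (simp add: connected_graph_induced_edges)
qed

lemma has_tw_le_contract:
  assumes td: "tree_decomp V E I F \<beta>" and width: "\<forall>i\<in>I. card (\<beta> i) \<le> k + 1" and "finite V"
    and K: "K \<subseteq> V" "a \<in> K" "connected_graph K E"
    and U: "U \<subseteq> V" "U \<inter> K = {a}"
    and E': "\<forall>e\<in>E'. (e \<subseteq> U \<and> e \<in> E) \<or> (\<exists>v\<in>U. e = {a, v} \<and> (\<exists>w\<in>K. {w, v} \<in> E))"
  shows "has_tw_le U E' k"
proof -
  have "card (\<beta> i \<inter> U \<union> (if \<beta> i \<inter> K \<noteq> {} then {a} else {})) \<le> k + 1" if "i \<in> I" for i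
  proof -
    have "finite (\<beta> i)" using td that \<open>finite V\<close> unfolding tree_decomp_def by (meson finite_subset)
    then show ?thesis using card_contracted_bag_le U(2) width that by (meson le_trans)
  qed
  then show ?thesis
    using tree_decomp_contract[OF td K U E'] unfolding has_tw_le_def by blast
qed

lemma card_le_2_cases:
  assumes "finite N" "card N \<le> 2"
  obtains "N = {}" | a where "N = {a}" | a b where "a \<noteq> b" "N = {a, b}"
proof -
  have "card N = 0 \<or> card N = 1 \<or> card N = 2" using assms(2) by arith
  then show ?thesis using assms(1) that by (auto simp: card_1_singleton_iff card_2_iff)
qed

text \<open>The torso edge between two neighbours \<open>a\<close> and \<open>b\<close> of \<open>D\<close> is obtained by contracting
  \<open>S - {b}\<close> onto \<open>a\<close>.\<close>

lemma torso_treewidth_le_2: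
  assumes "finite U" "treewidth U (induced_edges E U) \<le> 2"
    and "D \<subseteq> U" "D \<noteq> {}" "S \<subseteq> U" "D \<inter> S = {}" "biconnected S E"
    and "nbhd V E D \<subseteq> S" "card (nbhd V E D) \<le> 2"
  shows "treewidth (closed_nbhd V E D) (torso_edges V E D) \<le> 2"
proof -
  define N where "N = nbhd V E D"
  obtain I F \<beta> where td: "tree_decomp U (induced_edges E U) I F \<beta>" and width: "\<forall>i\<in>I. card (\<beta> i) \<le> 2 + 1"
    using treewidth_le_imp_tree_decomp[OF assms(1) _ assms(2)] by (auto simp: induced_edges_def)
  have DN: "D \<union> N \<subseteq> U" using assms(3,5,8) by (auto simp: N_def)
  have torso: "torso_edges V E D = induced_edges E (D \<union> N) \<union> {{u, v} |u v. u \<in> N \<and> v \<in> N \<and> u \<noteq> v}"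
    by (simp add: torso_edges_def closed_nbhd_def N_def)
  have induced: "e \<subseteq> D \<union> N \<and> e \<in> induced_edges E U" if "e \<in> induced_edges E (D \<union> N)" for e
    using that DN by (auto simp: induced_edges_def)
  have single: "has_tw_le (D \<union> N) (torso_edges V E D) 2" if "a \<in> D \<union> N" "N \<subseteq> {a}" for a
  proof -
    have no_pairs: "{{u, v} |u v. u \<in> N \<and> v \<in> N \<and> u \<noteq> v} = {}" using that(2) by blast
    have "\<forall>e\<in>torso_edges V E D. e \<subseteq> D \<union> N \<and> e \<in> induced_edges E U"
      using induced unfolding torso no_pairs by blast
    then show ?thesis
      by (intro has_tw_le_contract[OF td width assms(1), of "{a}" a])
        (use that DN in \<open>auto simp: connected_graph_singleton\<close>)
  qed
  have pair: "has_tw_le (D \<union> N) (torso_edges V E D) 2"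
    if ab_ne: "a \<noteq> b" and N_ab: "N = {a, b}" for a b
  proof -
    have ab: "a \<in> S" "b \<in> S" using N_ab assms(8) by (auto simp: N_def)
    have "connected_graph S E" using assms(7) by (simp add: biconnected_def)
    then have "reachable S E a b" using ab by (simp add: connected_graph_def)
    then obtain w where w: "w \<in> S - {b}" "{w, b} \<in> E"
      using reachable_crosses[of S E a b "S - {b}"] ab ab_ne by blast
    have "connected_graph (S - {b}) E"
      using biconnected_connected_Diff[OF assms(7)] assms(1,5) ab ab_ne finite_subset by blast
    then have K: "connected_graph (S - {b}) (induced_edges E U)"
      using assms(5) connected_graph_induced_edges[of "S - {b}" U E] by blast
    have "{w, b} \<in> induced_edges E U" using w ab assms(5) by (auto simp: induced_edges_def)
    then show ?thesis
      by (rule_tac has_tw_le_contract[OF td width assms(1) _ _ K, of a])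
        (use ab_ne N_ab ab w DN torso induced assms(5,6) in auto)
  qed
  obtain w where "w \<in> D" using assms(4) by blast
  have "finite N" "card N \<le> 2" using assms(1,5,8,9) by (auto simp: N_def intro: finite_subset)
  then have "has_tw_le (D \<union> N) (torso_edges V E D) 2"
    by (cases rule: card_le_2_cases) (use single[of w] \<open>w \<in> D\<close> single pair in auto)
  then show ?thesis
    using treewidth_le_if_has_tw_le by (simp add: closed_nbhd_def N_def)
qed

lemma components_induced_edges:
  "W \<subseteq> U \<Longrightarrow> components W (induced_edges E U) = components W E"
  by (simp add: components_def reachable_induced_edges)

lemma biconnected_induced_edges:
  assumes "S \<subseteq> U"
  shows "biconnected S (induced_edges E U) \<longleftrightarrow> biconnected S E"
proof -
  have "induced_edges (induced_edges E U) (S - {v}) = induced_edges E (S - {v})" for v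
    using assms by (auto simp: induced_edges_def)
  then show ?thesis
    using assms by (simp add: biconnected_def articulation_def components_induced_edges
        connected_graph_induced_edges)
qed

section \<open>The boundary of a biconnected part of \<open>G - X\<close>\<close>

text \<open>Otherwise all neighbours of the component lie in \<open>S\<close>; there are at most two of them, so its
  torso has treewidth at most 2 and the instance is trivial.\<close>

lemma component_touches_modulator:
  assumes "wf_graph V E" "\<not> trivial_instance V E t" "X \<subseteq> V"
    and "treewidth (V - X) (del_edges V E X) \<le> 2"
    and "S \<subseteq> V - X" "biconnected S E" "w \<in> V - X - S"
  shows "\<exists>d\<in>component (V - X - S) E w. \<exists>x\<in>X. {d, x} \<in> E"
proof (rule ccontr)
  assume no_edge: "\<not> ?thesis"
  define D where "D = component (V - X - S) E w"
  have D: "D \<subseteq> V - X - S" "w \<in> D" "connected_graph D E"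
    unfolding D_def using assms(7)
    by (simp_all add: component_subset self_in_component connected_component)
  have "finite V" using assms(1) by (simp add: wf_graph_def)
  have N: "nbhd V E D \<subseteq> S"
  proof
    fix v assume "v \<in> nbhd V E D"
    then obtain d where "v \<in> V" "v \<notin> D" "d \<in> D" "{d, v} \<in> E" by (auto simp: nbhd_def)
    then show "v \<in> S"
      using no_edge component_closed[of d "V - X - S" E w v] by (auto simp: D_def)
  qed
  have "nbhd V E D \<subseteq> attachments E S D"
    using N by (auto simp: nbhd_def attachments_def insert_commute)
  moreover have "finite (attachments E S D)"
    using \<open>finite V\<close> assms(5) by (auto simp: attachments_def intro: rev_finite_subset)
  moreover have "card (attachments E S D) \<le> 2"
    using card_attachments_le_2[of "V - X" E S D] assms(4-6) D \<open>finite V\<close>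
    by (auto simp: del_edges_def)
  ultimately have "card (nbhd V E D) \<le> 2" using card_mono le_trans by blast
  then have "treewidth (closed_nbhd V E D) (torso_edges V E D) \<le> 2"
    using torso_treewidth_le_2[of "V - X" E D S V] assms(4-6) D N \<open>finite V\<close>
    by (auto simp: del_edges_def)
  moreover have "connected_graph D (induced_edges E D)"
    using D(3) by (simp add: connected_graph_induced_edges)
  ultimately have "trivial_instance V E t"
    unfolding trivial_instance_def using D(1)
    by (intro disjI2 exI[of _ D] exI[of _ "induced_edges E D"]) (auto simp: induced_edges_def)
  then show False using assms(2) by contradiction
qed

lemma boundary_subset_attachments:
  assumes "wf_graph V E" "\<not> trivial_instance V E t" "X \<subseteq> V"
    and "treewidth (V - X) (del_edges V E X) \<le> 2"
    and "S \<subseteq> V - X" "biconnected S E"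
  shows "boundary V E S \<subseteq> (\<Union>x\<in>X. attachments E S (component (insert x (V - X - S)) E x))"
proof
  fix u assume "u \<in> boundary V E S"
  then obtain w where w: "u \<in> S" "w \<in> V - S" "{u, w} \<in> E" by (auto simp: boundary_def)
  obtain x where x: "x \<in> X" "w \<in> component (insert x (V - X - S)) E x"
  proof (cases "w \<in> X")
    case True
    show ?thesis by (rule that[OF True]) (simp add: self_in_component)
  next
    case False
    then have "w \<in> V - X - S" using w(2) by blast
    then obtain d x where d: "d \<in> component (V - X - S) E w" "x \<in> X" "{d, x} \<in> E"
      using component_touches_modulator[OF assms] by blast
    let ?W = "insert x (V - X - S)"
    have "d \<in> V - X - S" using d(1) component_subset[of "V - X - S" E w] by blast
    have "reachable (V - X - S) E w d" using d(1) by (simp add: component_def)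
    then have "reachable ?W E w d" by (rule reachable_subset) blast
    moreover have "reachable ?W E d x"
      using \<open>d \<in> V - X - S\<close> d(3) by (intro reachable_edge) simp_all
    ultimately have "reachable ?W E x w" by (metis reachable_sym reachable_trans)
    then have "w \<in> component ?W E x"
      using reachable_target_in[of ?W E x w] by (simp add: component_def)
    then show ?thesis by (rule that[OF d(2)])
  qed
  then show "u \<in> (\<Union>x\<in>X. attachments E S (component (insert x (V - X - S)) E x))"
    using w unfolding attachments_def by blast
qed

theorem mainTheorem10:
  fixes V :: "'a set" and E :: "'a set set" and t :: nat and X S :: "'a set"
  assumes "wf_graph V E"
    and "\<not> trivial_instance V E t"
    and "tidy_modulator V E X"
    and "S \<subseteq> V - X"
    and "biconnected S (induced_edges (del_edges V E X) S)"
  shows "card (boundary V E S) \<le> 2 * card X"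
proof -
  define A where "A x = attachments E S (component (insert x (V - X - S)) E x)" for x
  have fin: "finite V" "finite X" using assms(1,3) finite_subset
    by (auto simp: wf_graph_def tidy_modulator_def modulator_def)
  have tw: "treewidth (V - X) (del_edges V E X) \<le> 2" "X \<subseteq> V"
    and tw_x: "\<And>x. x \<in> X \<Longrightarrow> treewidth (V - (X - {x})) (induced_edges E (V - (X - {x}))) \<le> 2"
    using assms(3) by (auto simp: tidy_modulator_def modulator_def del_edges_def)
  have bic: "biconnected S E"
    using assms(4,5) by (simp add: del_edges_def induced_edges_induced_edges biconnected_induced_edges)
  have "card (A x) \<le> 2" if "x \<in> X" for x
    unfolding A_def
  proof (rule card_attachments_le_2[OF _ tw_x[OF that] _ _ bic])
    show "connected_graph (component (insert x (V - X - S)) E x) E" by (simp add: connected_component)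
  qed (use fin that assms(4) tw(2) component_subset in fastforce)+
  have "card (boundary V E S) \<le> card (\<Union>x\<in>X. A x)"
    using boundary_subset_attachments[OF assms(1,2) tw(2,1) assms(4) bic] fin assms(4)
    by (intro card_mono) (auto simp: A_def attachments_def intro: finite_subset)
  also have "\<dots> \<le> (\<Sum>x\<in>X. card (A x))" by (rule card_UN_le[OF fin(2)])
  also have "\<dots> \<le> (\<Sum>x\<in>X. 2)" using \<open>\<And>x. x \<in> X \<Longrightarrow> card (A x) \<le> 2\<close> by (rule sum_mono)
  finally show ?thesis by simp
qed

end
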